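(* Assume $\mathrm Z_++\mathrm Z_-=n-1$. Then for every sufficiently large real $\lambda>0$ the operator $C(\lambda)$ is boundedly invertible, and $\|C^{-1}(\lambda)\|=O(\lambda^{-1})$ as $\lambda\to+\infty$.
   Context: Let $n\ge 2$ be an integer, let $a_1,\dots,a_n>0$ with $\sum_k a_k=1$, and let $d_1,\dots,d_n,\beta_1,\dots,\beta_n$ be real numbers with $\sum_k a_kd_k^2<1$. Put $\alpha_0=0$ and $\alpha_k=\alpha_{k-1}+a_k$. Let $P\in L_2[0,1]$ be the unique function with $P(\alpha_{k-1}+a_kx)=\beta_k+d_kP(x)$ for a.e. $x\in[0,1]$, $k=1,\dots,n$. Assume there is $m\in\{1,\dots,n\}$ with $d_k=0$ for all $k\ne m$. Let $\mathfrak H=\{y\in W_2^1[0,1]: y(0)=y(1)=0\}$ with inner product $\langle y,z\rangle=\int_0^1 y'\overline{z'}\,dx$. For $k=1,\dots,n-1$ put $\gamma_k=\alpha_{k-1}$ if $k\ne m$, $\gamma_m=\alpha_m-a_ma_n$; $\delta_k=\alpha_{k+1}$ if $k\ne m-1$, $\delta_{m-1}=\alpha_{m-1}+a_ma_1$. Let $e_k\in\mathfrak H$ equal $(x-\gamma_k)/(\alpha_k-\gamma_k)$ on $[\gamma_k,\alpha_k]$, $(\delta_k-x)/(\delta_k-\alpha_k)$ on $[\alpha_k,\delta_k]$, and $0$ elsewhere, and let $\mathfrak H_2=\operatorname{span}\{e_1,\dots,e_{n-1}\}$. For $\lambda\in\mathbb R$ let $C(\lambda)$ be the self-adjoint operator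 on $\mathfrak H_2$ (with the inner product of $\mathfrak H$) such that $\langle C(\lambda)y,z\rangle=\int_0^1\big(y'\overline{z'}+\lambda P\cdot(y\overline z)'\big)dx$ for $y,z\in\mathfrak H_2$. For $k=1,\dots,n-1$ define $\zeta_{m-1}=\beta_m-\beta_{m-1}+d_m\beta_1$ (if $m-1\ge1$), $\zeta_m=\beta_{m+1}-\beta_m-d_m\beta_n$ (if $m\le n-1$), and $\zeta_k=\beta_{k+1}-\beta_k$ for the other $k$. Let $\mathrm Z_\pm=\#\{k\in\{1,\dots,n-1\}:\pm\zeta_k>0\}$. *)

theory Defs
  imports "HOL-Analysis.Analysis" "HOL-Library.Landau_Symbols"
begin

text \<open>Sequences are indexed 1..n; a, d, beta :: nat => real.\<close>

definition alpha :: "(nat \<Rightarrow> real) \<Rightarrow> nat \<Rightarrow> real" where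
  "alpha a k = (\<Sum>i=1..k. a i)"

definition gam :: "(nat \<Rightarrow> real) \<Rightarrow> nat \<Rightarrow> nat \<Rightarrow> nat \<Rightarrow> real" where
  "gam a n m k = (if k = m then alpha a m - a m * a n else alpha a (k - 1))"

definition delt :: "(nat \<Rightarrow> real) \<Rightarrow> nat \<Rightarrow> nat \<Rightarrow> real" where
  "delt a m k = (if k + 1 = m then alpha a (m - 1) + a m * a 1 else alpha a (k + 1))"

definition hat :: "real \<Rightarrow> real \<Rightarrow> real \<Rightarrow> real \<Rightarrow> real" where
  "hat g al dl x = (if g \<le> x \<and> x \<le> al then (x - g) / (al - g)
                    else if al \<le> x \<and> x \<le> dl then (dl - x) / (dl - al) else 0)"

definition ebasis :: "(nat \<Rightarrow> real) \<Rightarrow> nat \<Rightarrow> nat \<Rightarrow> nat \<Rightarrow> real \<Rightarrow> complex" where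
  "ebasis a n m k x = complex_of_real (hat (gam a n m k) (alpha a k) (delt a m k) x)"

definition H2 :: "(nat \<Rightarrow> real) \<Rightarrow> nat \<Rightarrow> nat \<Rightarrow> (real \<Rightarrow> complex) set" where
  "H2 a n m = {(\<lambda>x. \<Sum>k=1..n-1. c k * ebasis a n m k x) | c :: nat \<Rightarrow> complex. True}"

definition ipH :: "(real \<Rightarrow> complex) \<Rightarrow> (real \<Rightarrow> complex) \<Rightarrow> complex" where
  "ipH y z = integral {0..1} (\<lambda>x. vector_derivative y (at x) * cnj (vector_derivative z (at x)))"

definition normH :: "(real \<Rightarrow> complex) \<Rightarrow> real" where
  "normH y = sqrt (Re (ipH y y))"

definition Cform :: "(real \<Rightarrow> real) \<Rightarrow> real \<Rightarrow> (real \<Rightarrow> complex) \<Rightarrow> (real \<Rightarrow> complex) \<Rightarrow> complex" where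
  "Cform P lam y z = integral {0..1} (\<lambda>x. vector_derivative y (at x) * cnj (vector_derivative z (at x))
       + complex_of_real (lam * P x) * vector_derivative (\<lambda>t. y t * cnj (z t)) (at x))"

definition opnorm_on :: "(real \<Rightarrow> complex) set \<Rightarrow> ((real \<Rightarrow> complex) \<Rightarrow> (real \<Rightarrow> complex)) \<Rightarrow> real" where
  "opnorm_on S T = Sup ((\<lambda>w. normH (T w) / normH w) ` (S - {\<lambda>x. 0}))"

definition zeta :: "(nat \<Rightarrow> real) \<Rightarrow> (nat \<Rightarrow> real) \<Rightarrow> nat \<Rightarrow> nat \<Rightarrow> nat \<Rightarrow> real" where
  "zeta d beta n m k =
     (if k + 1 = m then beta m - beta (m - 1) + d m * beta 1
      else if k = m then beta (m + 1) - beta m - d m * beta n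
      else beta (k + 1) - beta k)"

definition Zplus :: "(nat \<Rightarrow> real) \<Rightarrow> (nat \<Rightarrow> real) \<Rightarrow> nat \<Rightarrow> nat \<Rightarrow> nat" where
  "Zplus d beta n m = card {k \<in> {1..n-1}. zeta d beta n m k > 0}"

definition Zminus :: "(nat \<Rightarrow> real) \<Rightarrow> (nat \<Rightarrow> real) \<Rightarrow> nat \<Rightarrow> nat \<Rightarrow> nat" where
  "Zminus d beta n m = card {k \<in> {1..n-1}. zeta d beta n m k < 0}"

end

theory Submission
  imports Defs "Jordan_Normal_Form.Determinant"
begin

text \<open>Writing \<open>y = \<Sum> c\<^sub>k e\<^sub>k\<close>, everything happens on coefficient vectors. The Dirichlet part of the form
  is the Gram matrix \<open>G\<close> of the \<open>e\<^sub>k'\<close>. By self-similarity \<open>P\<close> is a.e. constant on each linear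
  piece of \<open>e\<^sub>k\<close>, the two values differing by \<open>\<zeta>\<^sub>k\<close>, so integrating by parts the \<open>P\<close>-part of the form
  is \<open>-\<lambda> diag \<zeta>\<close>. The hypothesis \<open>Z\<^sub>+ + Z\<^sub>- = n - 1\<close> says that no \<open>\<zeta>\<^sub>k\<close> vanishes, and testing the
  form of \<open>C(\<lambda>)\<close> against the sign-twisted vector \<open>(sgn \<zeta>\<^sub>k c\<^sub>k)\<close> gives
  \<open>\<lambda> min |\<zeta>| |c|\<^sup>2 \<le> K |c|\<^sup>2 + \<parallel>C(\<lambda>) y\<parallel> \<surd>K |c|\<close> with \<open>K = \<Sum>|G\<^sub>j\<^sub>k|\<close>. For large \<open>\<lambda>\<close> this yields
  injectivity, hence (finite dimension) bijectivity, and \<open>\<parallel>y\<parallel> \<le> 2K/(\<lambda> min |\<zeta>|) \<parallel>C(\<lambda>) y\<parallel>\<close>.\<close>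

lemma alpha_0 [simp]: "alpha a 0 = 0"
  by (simp add: alpha_def)

lemma alpha_Suc: "alpha a (Suc k) = alpha a k + a (Suc k)"
  by (simp add: alpha_def)

lemma alpha_pred: "1 \<le> k \<Longrightarrow> alpha a k = alpha a (k - 1) + a k"
  by (cases k) (auto simp: alpha_Suc)

lemma alpha_strict_mono:
  assumes "\<forall>i\<in>{1..n}. a i > 0" "k < l" "l \<le> n"
  shows "alpha a k < alpha a l"
  using assms(2,3)
proof (induction l)
  case (Suc l)
  have "a (Suc l) > 0" using assms(1) Suc.prems by auto
  moreover have "k = l \<or> alpha a k < alpha a l" using Suc by (auto simp: less_Suc_eq)
  ultimately show ?case by (auto simp: alpha_Suc)
qed simp

lemma alpha_mono:
  assumes "\<forall>i\<in>{1..n}. a i > 0" "k \<le> l" "l \<le> n"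
  shows "alpha a k \<le> alpha a l"
  using alpha_strict_mono[OF assms(1), of k l] assms(2,3) by (cases "k = l") auto

lemma hat_eq_max_min:
  assumes "g < al" "al < dl"
  shows "hat g al dl x = max 0 (min ((x - g) / (al - g)) ((dl - x) / (dl - al)))"
proof -
  have pos: "al - g > 0" "dl - al > 0" using assms by auto
  consider "g \<le> x \<and> x \<le> al" | "\<not> (g \<le> x \<and> x \<le> al) \<and> al \<le> x \<and> x \<le> dl" | "x < g" | "dl < x"
    by linarith
  then show ?thesis
  proof cases
    case 1
    then have "(x - g) / (al - g) \<le> 1" "1 \<le> (dl - x) / (dl - al)" "0 \<le> (x - g) / (al - g)"
      using pos by (auto simp: divide_simps)
    then show ?thesis using 1 by (simp add: hat_def)
  next
    case 2
    then have "1 \<le> (x - g) / (al - g)" "(dl - x) / (dl - al) \<le> 1" "0 \<le> (dl - x) / (dl - al)"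
      using pos by (auto simp: divide_simps)
    then show ?thesis using 2 by (auto simp: hat_def)
  next
    case 3
    then have "(x - g) / (al - g) < 0" using pos by (auto simp: divide_simps)
    then show ?thesis using 3 assms by (simp add: hat_def)
  next
    case 4
    then have "(dl - x) / (dl - al) < 0" using pos by (auto simp: divide_simps)
    then show ?thesis using 4 assms by (simp add: hat_def)
  qed
qed

lemma continuous_on_hat:
  assumes "g < al" "al < dl"
  shows "continuous_on S (hat g al dl)"
proof -
  have "continuous_on S (\<lambda>x. max 0 (min ((x - g) / (al - g)) ((dl - x) / (dl - al))))"
    using assms by (intro continuous_intros) auto
  then show ?thesis using hat_eq_max_min[OF assms] by simp
qed

lemma hat_peak: "g < al \<Longrightarrow> hat g al dl al = 1"
  by (simp add: hat_def)

lemma hat_outside: "g < al \<Longrightarrow> al < dl \<Longrightarrow> x \<le> g \<or> dl \<le> x \<Longrightarrow> hat g al dl x = 0"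
  by (auto simp: hat_def)

definition hat_slope :: "real \<Rightarrow> real \<Rightarrow> real \<Rightarrow> real \<Rightarrow> real" where
  "hat_slope g al dl x =
     (if g < x \<and> x < al then 1 / (al - g) else if al < x \<and> x < dl then - 1 / (dl - al) else 0)"

lemma hat_slope_outside: "g < al \<Longrightarrow> al < dl \<Longrightarrow> x \<le> g \<or> dl \<le> x \<Longrightarrow> hat_slope g al dl x = 0"
  by (auto simp: hat_slope_def)

lemma hat_has_real_derivative:
  assumes "g < al" "al < dl" "x \<notin> {g, al, dl}"
  shows "(hat g al dl has_real_derivative hat_slope g al dl x) (at x)"
proof -
  have transfer: "(hat g al dl has_real_derivative D) (at x)"
    if "x \<in> S" "open S" "\<And>y. y \<in> S \<Longrightarrow> f y = hat g al dl y" "(f has_real_derivative D) (at x)"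
    for f D S
    by (rule has_field_derivative_transform_within_open[OF that(4,2,1)]) (use that(3) in auto)
  consider "g < x \<and> x < al" | "al < x \<and> x < dl" | "x < g" | "dl < x"
    using assms by force
  then show ?thesis
  proof cases
    case 1
    have "((\<lambda>x. (x - g) / (al - g)) has_real_derivative 1 / (al - g)) (at x)"
      using assms by (auto intro!: derivative_eq_intros)
    from transfer[where S="{g<..<al}", OF _ _ _ this] show ?thesis
      using 1 by (auto simp: hat_def hat_slope_def)
  next
    case 2
    have "((\<lambda>x. (dl - x) / (dl - al)) has_real_derivative - 1 / (dl - al)) (at x)"
      using assms by (auto intro!: derivative_eq_intros simp: divide_simps)
    from transfer[where S="{al<..<dl}", OF _ _ _ this] show ?thesis
      using 2 by (auto simp: hat_def hat_slope_def)
  next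
    case 3
    from transfer[where S="{..<g}", OF _ _ _ DERIV_const] show ?thesis
      using 3 assms by (auto simp: hat_def hat_slope_def)
  next
    case 4
    from transfer[where S="{dl<..}", OF _ _ _ DERIV_const] show ?thesis
      using 4 assms by (auto simp: hat_def hat_slope_def)
  qed
qed

definition indicator_open :: "real \<Rightarrow> real \<Rightarrow> real \<Rightarrow> real" where
  "indicator_open u v x = (if u < x \<and> x < v then 1 else 0)"

lemma indicator_open_integrable: "indicator_open u v integrable_on {0..1}"
proof -
  have "(\<lambda>x::real. 1::real) integrable_on {u..v} \<inter> {0..1}"
    by (simp add: Int_atLeastAtMost integrable_const_ivl del: max_def min_def)
  then have "(\<lambda>x. if x \<in> {u..v} then (1::real) else 0) integrable_on {0..1}"
    unfolding integrable_restrict_Int .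
  then show ?thesis
    by (rule integrable_spike_finite[of "{u, v}", rotated 2]) (auto simp: indicator_open_def)
qed

lemma hat_slope_eq_indicators:
  "g < al \<Longrightarrow> al < dl \<Longrightarrow> hat_slope g al dl x =
     1 / (al - g) * indicator_open g al x - 1 / (dl - al) * indicator_open al dl x"
  by (auto simp: hat_slope_def indicator_open_def)

lemma hat_slope_product_integrable:
  assumes "g < al" "al < dl" "g' < al'" "al' < dl'"
  shows "(\<lambda>x. hat_slope g al dl x * hat_slope g' al' dl' x) integrable_on {0..1}"
proof -
  have prod: "indicator_open u v x * indicator_open u' v' x = indicator_open (max u u') (min v v') x"
    for u v u' v' x
    by (auto simp: indicator_open_def)
  let ?p = "1 / (al - g)" and ?q = "1 / (dl - al)" and ?p' = "1 / (al' - g')" and ?q' = "1 / (dl' - al')"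
  have "(\<lambda>x. hat_slope g al dl x * hat_slope g' al' dl' x) = (\<lambda>x.
      (?p * ?p') * indicator_open (max g g') (min al al') x
    - (?p * ?q') * indicator_open (max g al') (min al dl') x
    - (?q * ?p') * indicator_open (max al g') (min dl al') x
    + (?q * ?q') * indicator_open (max al al') (min dl dl') x)"
    by (rule ext) (simp add: hat_slope_eq_indicators[OF assms(1,2)]
        hat_slope_eq_indicators[OF assms(3,4)] prod[symmetric] algebra_simps)
  then show ?thesis
    by (simp only:) (intro integrable_diff integrable_add integrable_on_mult_right
        indicator_open_integrable)
qed


lemma square_system_solvable:
  fixes M :: "nat \<Rightarrow> nat \<Rightarrow> complex" and r :: "nat \<Rightarrow> complex"
  assumes inj: "\<And>x. \<forall>k\<in>{1..N}. (\<Sum>j=1..N. M k j * x j) = 0 \<Longrightarrow> \<forall>k\<in>{1..N}. x k = 0"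
  shows "\<exists>x. \<forall>k\<in>{1..N}. (\<Sum>j=1..N. M k j * x j) = r k"
proof -
  define A where "A = Matrix.mat N N (\<lambda>(i, j). M (Suc i) (Suc j))"
  have A: "A \<in> carrier_mat N N" by (simp add: A_def)
  have row: "vec_index (A *\<^sub>v v) (k - 1) = (\<Sum>j=1..N. M k j * vec_index v (j - 1))"
    if "k \<in> {1..N}" "v \<in> carrier_vec N" for v k
  proof -
    have "k - 1 < N" "Suc (k - 1) = k" using that(1) by auto
    then have "vec_index (A *\<^sub>v v) (k - 1) = (\<Sum>j<N. M k (Suc j) * vec_index v j)"
      using that(2) by (simp add: A_def scalar_prod_def atLeast0LessThan)
    also have "\<dots> = (\<Sum>j=1..N. M k j * vec_index v (j - 1))"
      by (simp add: sum.atLeast1_atMost_eq)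
    finally show ?thesis .
  qed
  have "det A \<noteq> 0"
  proof
    assume "det A = 0"
    then obtain v where v: "v \<in> carrier_vec N" "v \<noteq> 0\<^sub>v N" "A *\<^sub>v v = 0\<^sub>v N"
      using det_0_iff_vec_prod_zero_field[OF A] by auto
    have "\<forall>k\<in>{1..N}. (\<Sum>j=1..N. M k j * vec_index v (j - 1)) = 0"
    proof
      fix k assume k: "k \<in> {1..N}"
      then have "vec_index (A *\<^sub>v v) (k - 1) = 0" using v(3) by auto
      then show "(\<Sum>j=1..N. M k j * vec_index v (j - 1)) = 0" using row[OF k v(1)] by simp
    qed
    then have "\<forall>k\<in>{1..N}. vec_index v (k - 1) = 0" by (rule inj)
    then have "v = 0\<^sub>v N"
      using v(1) by (intro eq_vecI) (auto dest!: bspec[of _ _ "Suc _"])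
    then show False using v(2) by simp
  qed
  then obtain B where B: "B \<in> carrier_mat N N" "A * B = 1\<^sub>m N"
    using det_non_zero_imp_unit[OF A] by (auto simp: Units_def ring_mat_def)
  define rv where "rv = Matrix.vec N (\<lambda>i. r (Suc i))"
  define v where "v = B *\<^sub>v rv"
  have v: "v \<in> carrier_vec N" using B by (simp add: v_def rv_def)
  have Av: "A *\<^sub>v v = rv"
    unfolding v_def using A B by (simp add: assoc_mult_mat_vec[symmetric] rv_def)
  show ?thesis
  proof (intro exI ballI)
    fix k assume k: "k \<in> {1..N}"
    then have "k - 1 < N" "Suc (k - 1) = k" by auto
    then have "vec_index (A *\<^sub>v v) (k - 1) = r k" by (simp add: Av rv_def)
    then show "(\<Sum>j=1..N. M k j * vec_index v (j - 1)) = r k" using row[OF k v] by simp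
  qed
qed

definition matrix_form :: "(nat \<Rightarrow> nat \<Rightarrow> real) \<Rightarrow> nat \<Rightarrow> (nat \<Rightarrow> complex) \<Rightarrow> (nat \<Rightarrow> complex) \<Rightarrow> complex"
  where "matrix_form A N c e = (\<Sum>j=1..N. \<Sum>k=1..N. c j * cnj (e k) * complex_of_real (A j k))"

definition diag_form :: "(nat \<Rightarrow> real) \<Rightarrow> nat \<Rightarrow> (nat \<Rightarrow> complex) \<Rightarrow> (nat \<Rightarrow> complex) \<Rightarrow> complex"
  where "diag_form w N c e = (\<Sum>k=1..N. c k * cnj (e k) * complex_of_real (w k))"

definition coef_sqnorm :: "nat \<Rightarrow> (nat \<Rightarrow> complex) \<Rightarrow> real"
  where "coef_sqnorm N c = (\<Sum>k=1..N. (cmod (c k))\<^sup>2)"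

definition entry_abs_sum :: "(nat \<Rightarrow> nat \<Rightarrow> real) \<Rightarrow> nat \<Rightarrow> real"
  where "entry_abs_sum A N = (\<Sum>j=1..N. \<Sum>k=1..N. \<bar>A j k\<bar>)"

definition sign_twist :: "(nat \<Rightarrow> real) \<Rightarrow> (nat \<Rightarrow> complex) \<Rightarrow> nat \<Rightarrow> complex"
  where "sign_twist w c k = complex_of_real (sgn (w k)) * c k"

lemma matrix_form_hermitian:
  "(\<And>j k. A j k = A k j) \<Longrightarrow> matrix_form A N e c = cnj (matrix_form A N c e)"
  unfolding matrix_form_def cnj_sum
  by (subst sum.swap) (auto intro!: sum.cong simp: mult.commute)

lemma matrix_form_add_left:
  "matrix_form A N (\<lambda>k. c k + t * e k) f = matrix_form A N c f + t * matrix_form A N e f"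
  unfolding matrix_form_def sum_distrib_left sum.distrib[symmetric]
  by (intro sum.cong refl) (simp add: algebra_simps)

lemma matrix_form_add_right:
  "matrix_form A N f (\<lambda>k. c k + t * e k) = matrix_form A N f c + cnj t * matrix_form A N f e"
  unfolding matrix_form_def sum_distrib_left sum.distrib[symmetric]
  by (intro sum.cong refl) (simp add: algebra_simps)

lemma matrix_form_diff_left:
  "matrix_form A N (\<lambda>k. c k - e k) f = matrix_form A N c f - matrix_form A N e f"
  unfolding matrix_form_def sum_subtractf[symmetric]
  by (intro sum.cong refl) (simp add: algebra_simps)

lemma matrix_form_zero_left [simp]: "matrix_form A N (\<lambda>k. 0) e = 0"
  by (simp add: matrix_form_def)

lemma matrix_form_by_columns:
  "matrix_form A N c e = (\<Sum>k=1..N. cnj (e k) * (\<Sum>j=1..N. complex_of_real (A j k) * c j))"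
  unfolding matrix_form_def sum_distrib_left
  by (subst sum.swap) (intro sum.cong refl, simp add: algebra_simps)

lemma matrix_form_minus_diag:
  "matrix_form (\<lambda>j k. A j k - s * (if j = k then w k else 0)) N c e
     = matrix_form A N c e - complex_of_real s * diag_form w N c e"
proof -
  have "matrix_form (\<lambda>j k. A j k - s * (if j = k then w k else 0)) N c e
      = matrix_form A N c e
        - (\<Sum>j=1..N. \<Sum>k=1..N. if j = k then c j * cnj (e j) * complex_of_real (s * w j) else 0)"
    unfolding matrix_form_def sum_subtractf[symmetric]
    by (intro sum.cong refl) (simp add: algebra_simps)
  then show ?thesis
    by (simp add: diag_form_def sum_distrib_left algebra_simps)
qed

lemma entry_abs_sum_nonneg: "0 \<le> entry_abs_sum A N"
  unfolding entry_abs_sum_def by (intro sum_nonneg) auto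

lemma coef_sqnorm_nonneg: "0 \<le> coef_sqnorm N c"
  unfolding coef_sqnorm_def by (intro sum_nonneg) auto

lemma coef_sqnorm_eq_0: "coef_sqnorm N c = 0 \<Longrightarrow> k \<in> {1..N} \<Longrightarrow> c k = 0"
  unfolding coef_sqnorm_def by (subst (asm) sum_nonneg_eq_0_iff) auto

lemma norm_coef_le: "k \<in> {1..N} \<Longrightarrow> cmod (c k) \<le> sqrt (coef_sqnorm N c)"
  unfolding coef_sqnorm_def by (rule real_le_rsqrt, rule member_le_sum) auto

lemma norm_matrix_form_le:
  "cmod (matrix_form A N c e) \<le> entry_abs_sum A N * (sqrt (coef_sqnorm N c) * sqrt (coef_sqnorm N e))"
proof -
  have "cmod (matrix_form A N c e) \<le> (\<Sum>j=1..N. \<Sum>k=1..N. cmod (c j * cnj (e k) * complex_of_real (A j k)))"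
    unfolding matrix_form_def by (rule order_trans[OF norm_sum sum_mono]) (rule norm_sum)
  also have "\<dots> \<le> (\<Sum>j=1..N. \<Sum>k=1..N. \<bar>A j k\<bar> * (sqrt (coef_sqnorm N c) * sqrt (coef_sqnorm N e)))"
  proof (intro sum_mono)
    fix j k assume "j \<in> {1..N}" "k \<in> {1..N}"
    then have "cmod (c j) * cmod (e k) \<le> sqrt (coef_sqnorm N c) * sqrt (coef_sqnorm N e)"
      by (intro mult_mono norm_coef_le) (auto simp: coef_sqnorm_nonneg)
    from mult_left_mono[OF this, of "\<bar>A j k\<bar>"]
    show "cmod (c j * cnj (e k) * complex_of_real (A j k))
        \<le> \<bar>A j k\<bar> * (sqrt (coef_sqnorm N c) * sqrt (coef_sqnorm N e))"
      by (simp add: norm_mult ac_simps)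
  qed
  also have "\<dots> = entry_abs_sum A N * (sqrt (coef_sqnorm N c) * sqrt (coef_sqnorm N e))"
    by (simp add: entry_abs_sum_def sum_distrib_right)
  finally show ?thesis .
qed

lemma Re_matrix_form_le: "Re (matrix_form A N c c) \<le> entry_abs_sum A N * coef_sqnorm N c"
  using complex_Re_le_cmod[of "matrix_form A N c c"] norm_matrix_form_le[where A = A and N = N and c = c and e = c]
  by (simp add: coef_sqnorm_nonneg)

lemma matrix_form_Cauchy_Schwarz:
  fixes A :: "nat \<Rightarrow> nat \<Rightarrow> real"
  assumes sym: "\<And>j k. A j k = A k j" and psd: "\<And>c. 0 \<le> Re (matrix_form A N c c)"
  shows "(cmod (matrix_form A N c e))\<^sup>2 \<le> Re (matrix_form A N c c) * Re (matrix_form A N e e)"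
proof -
  let ?b = "matrix_form A N c e" and ?Bc = "Re (matrix_form A N c c)" and ?Be = "Re (matrix_form A N e e)"
  have quadratic: "0 \<le> ?Bc - 2 * r * (cmod ?b)\<^sup>2 + r\<^sup>2 * (cmod ?b)\<^sup>2 * ?Be" for r :: real
  proof -
    define t where "t = - complex_of_real r * ?b"
    have bb: "?b * cnj ?b = complex_of_real ((cmod ?b)\<^sup>2)"
      by (metis complex_norm_square)
    have "matrix_form A N (\<lambda>k. c k + t * e k) (\<lambda>k. c k + t * e k)
        = matrix_form A N c c + cnj t * ?b + t * cnj ?b + t * cnj t * matrix_form A N e e"
      unfolding matrix_form_add_left matrix_form_add_right matrix_form_hermitian[OF sym, where e = e and c = c]
      by (simp add: algebra_simps)
    also have "cnj t * ?b = - complex_of_real (r * (cmod ?b)\<^sup>2)"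
      unfolding t_def using bb by (simp add: mult.commute mult.left_commute)
    also have "t * cnj ?b = - complex_of_real (r * (cmod ?b)\<^sup>2)"
      unfolding t_def using bb by (simp add: mult.assoc)
    also have "t * cnj t = complex_of_real (r\<^sup>2 * (cmod ?b)\<^sup>2)"
      unfolding t_def using bb by (simp add: algebra_simps power2_eq_square)
    finally show ?thesis using psd[of "\<lambda>k. c k + t * e k"] by simp
  qed
  show ?thesis
  proof (cases "?Be > 0")
    case True
    have "0 \<le> ?Bc - 2 * (1 / ?Be) * (cmod ?b)\<^sup>2 + (1 / ?Be)\<^sup>2 * (cmod ?b)\<^sup>2 * ?Be"
      by (rule quadratic)
    also have "\<dots> = ?Bc - (cmod ?b)\<^sup>2 / ?Be"
      using True by (simp add: power2_eq_square field_simps)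
    finally show ?thesis using True by (simp add: divide_simps mult.commute)
  next
    case False
    then have "?Be = 0" using psd[of e] by simp
    show ?thesis
    proof (rule ccontr)
      assume "\<not> ?thesis"
      then have pos: "(cmod ?b)\<^sup>2 > 0" using \<open>?Be = 0\<close> by simp
      have "0 \<le> ?Bc - 2 * ((?Bc + 1) / (2 * (cmod ?b)\<^sup>2)) * (cmod ?b)\<^sup>2"
        using quadratic[of "(?Bc + 1) / (2 * (cmod ?b)\<^sup>2)"] \<open>?Be = 0\<close> by simp
      also have "\<dots> = -1" using pos by (simp add: field_simps)
      finally show False by simp
    qed
  qed
qed

lemma diag_form_sign_twist:
  "diag_form w N c (sign_twist w c) = complex_of_real (\<Sum>k=1..N. (cmod (c k))\<^sup>2 * \<bar>w k\<bar>)"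
  "diag_form w N (sign_twist w c) c = complex_of_real (\<Sum>k=1..N. (cmod (c k))\<^sup>2 * \<bar>w k\<bar>)"
proof -
  have sq: "c k * cnj (c k) * complex_of_real (sgn (w k) * w k)
      = complex_of_real ((cmod (c k))\<^sup>2 * \<bar>w k\<bar>)" for k
  proof -
    have "c k * cnj (c k) = complex_of_real ((cmod (c k))\<^sup>2)"
      by (metis complex_norm_square)
    moreover have "sgn (w k) * w k = \<bar>w k\<bar>" by (simp add: sgn_if)
    ultimately show ?thesis by simp
  qed
  have "c k * cnj (sign_twist w c k) * complex_of_real (w k)
      = complex_of_real ((cmod (c k))\<^sup>2 * \<bar>w k\<bar>)"
    "sign_twist w c k * cnj (c k) * complex_of_real (w k)
      = complex_of_real ((cmod (c k))\<^sup>2 * \<bar>w k\<bar>)" for k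
    unfolding sign_twist_def sq[symmetric] by (simp_all add: ac_simps)
  then show "diag_form w N c (sign_twist w c) = complex_of_real (\<Sum>k=1..N. (cmod (c k))\<^sup>2 * \<bar>w k\<bar>)"
    "diag_form w N (sign_twist w c) c = complex_of_real (\<Sum>k=1..N. (cmod (c k))\<^sup>2 * \<bar>w k\<bar>)"
    unfolding diag_form_def of_real_sum by simp_all
qed

lemma coef_sqnorm_sign_twist:
  "(\<And>k. k \<in> {1..N} \<Longrightarrow> w k \<noteq> 0) \<Longrightarrow> coef_sqnorm N (sign_twist w c) = coef_sqnorm N c"
  unfolding coef_sqnorm_def sign_twist_def by (intro sum.cong refl) (simp add: norm_mult)

lemma weighted_sqnorm_ge:
  "(\<And>k. k \<in> {1..N} \<Longrightarrow> \<mu> \<le> \<bar>w k\<bar>) \<Longrightarrow> \<mu> * coef_sqnorm N c \<le> (\<Sum>k=1..N. (cmod (c k))\<^sup>2 * \<bar>w k\<bar>)"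
  unfolding coef_sqnorm_def sum_distrib_left
  by (intro sum_mono) (auto intro!: mult_right_mono simp: mult.commute)


lemma matrix_form_solvable:
  assumes kernel: "\<And>x. (\<And>e. matrix_form M N x e = 0) \<Longrightarrow> \<forall>k\<in>{1..N}. x k = 0"
  shows "\<exists>x. \<forall>e. matrix_form M N x e = matrix_form A N b e"
proof -
  have "\<exists>x. \<forall>k\<in>{1..N}. (\<Sum>j=1..N. complex_of_real (M j k) * x j)
                        = (\<Sum>j=1..N. complex_of_real (A j k) * b j)"
  proof (rule square_system_solvable)
    fix x assume "\<forall>k\<in>{1..N}. (\<Sum>j=1..N. complex_of_real (M j k) * x j) = 0"
    then have "matrix_form M N x e = 0" for e
      unfolding matrix_form_by_columns by (intro sum.neutral) simp
    then show "\<forall>k\<in>{1..N}. x k = 0" by (rule kernel)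
  qed
  then obtain x where "\<forall>k\<in>{1..N}. (\<Sum>j=1..N. complex_of_real (M j k) * x j)
                        = (\<Sum>j=1..N. complex_of_real (A j k) * b j)" ..
  then have "matrix_form M N x e = matrix_form A N b e" for e
    unfolding matrix_form_by_columns by (intro sum.cong) simp_all
  then show ?thesis by blast
qed

text \<open>Testing against the sign twist turns the diagonal part into \<open>\<Sum> |c\<^sub>k|\<^sup>2 |w\<^sub>k|\<close>.\<close>

lemma matrix_form_coercive_estimate:
  fixes A :: "nat \<Rightarrow> nat \<Rightarrow> real"
  assumes sym: "\<And>j k. A j k = A k j" and psd: "\<And>c. 0 \<le> Re (matrix_form A N c c)"
    and w: "\<And>k. k \<in> {1..N} \<Longrightarrow> \<mu> \<le> \<bar>w k\<bar>" and \<mu>: "0 < \<mu>" and lam: "0 \<le> lam"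
    and eq: "matrix_form A N c' (sign_twist w c)
      = matrix_form (\<lambda>j k. A j k - lam * (if j = k then w k else 0)) N c (sign_twist w c)"
  shows "lam * \<mu> * coef_sqnorm N c \<le> entry_abs_sum A N * coef_sqnorm N c
           + sqrt (Re (matrix_form A N c' c')) * sqrt (entry_abs_sum A N * coef_sqnorm N c)"
proof -
  let ?\<sigma> = "sign_twist w c" and ?s = "coef_sqnorm N c" and ?K = "entry_abs_sum A N"
  let ?W = "\<Sum>k=1..N. (cmod (c k))\<^sup>2 * \<bar>w k\<bar>"
  have sq\<sigma>: "coef_sqnorm N ?\<sigma> = ?s"
    using w \<mu> by (intro coef_sqnorm_sign_twist) force
  have diff: "complex_of_real (lam * ?W) = matrix_form A N c ?\<sigma> - matrix_form A N c' ?\<sigma>"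
    using eq unfolding matrix_form_minus_diag diag_form_sign_twist by simp
  have W: "0 \<le> lam * ?W" using lam by (simp add: sum_nonneg)
  have "lam * ?W = cmod (complex_of_real (lam * ?W))"
    by (simp only: norm_of_real abs_of_nonneg[OF W])
  also have "\<dots> \<le> cmod (matrix_form A N c ?\<sigma>) + cmod (matrix_form A N c' ?\<sigma>)"
    unfolding diff by (rule norm_triangle_ineq4)
  also have "cmod (matrix_form A N c ?\<sigma>) \<le> ?K * ?s"
    using norm_matrix_form_le[where A = A and N = N and c = c and e = ?\<sigma>]
    by (simp add: sq\<sigma> coef_sqnorm_nonneg)
  also have "cmod (matrix_form A N c' ?\<sigma>) \<le> sqrt (Re (matrix_form A N c' c')) * sqrt (?K * ?s)"
  proof -
    have "cmod (matrix_form A N c' ?\<sigma>)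
        \<le> sqrt (Re (matrix_form A N c' c')) * sqrt (Re (matrix_form A N ?\<sigma> ?\<sigma>))"
      using matrix_form_Cauchy_Schwarz[OF sym psd, of c' ?\<sigma>]
      by (simp add: real_le_rsqrt real_sqrt_mult[symmetric])
    also have "\<dots> \<le> sqrt (Re (matrix_form A N c' c')) * sqrt (?K * ?s)"
      using Re_matrix_form_le[of A N ?\<sigma>] psd[of c']
      by (intro mult_left_mono real_sqrt_le_mono) (simp_all add: sq\<sigma>)
    finally show ?thesis .
  qed
  finally have "lam * ?W \<le> ?K * ?s + sqrt (Re (matrix_form A N c' c')) * sqrt (?K * ?s)" by simp
  moreover have "lam * (\<mu> * ?s) \<le> lam * ?W"
    using lam w by (intro mult_left_mono weighted_sqnorm_ge) auto
  ultimately show ?thesis by (simp add: mult.assoc)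
qed

lemma matrix_form_kernel_trivial:
  fixes A :: "nat \<Rightarrow> nat \<Rightarrow> real"
  assumes sym: "\<And>j k. A j k = A k j" and psd: "\<And>c. 0 \<le> Re (matrix_form A N c c)"
    and w_bound: "\<And>k. k \<in> {1..N} \<Longrightarrow> \<mu> \<le> \<bar>w k\<bar>" and \<mu>: "0 < \<mu>"
    and lam: "entry_abs_sum A N < lam * \<mu>"
    and zero: "matrix_form (\<lambda>j k. A j k - lam * (if j = k then w k else 0)) N c (sign_twist w c) = 0"
    and k: "k \<in> {1..N}"
  shows "c k = 0"
proof -
  have "0 \<le> lam"
  proof (rule ccontr)
    assume "\<not> 0 \<le> lam"
    then have "lam * \<mu> < 0" using \<mu> by (simp add: mult_neg_pos)
    then show False using lam entry_abs_sum_nonneg[of A N] by linarith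
  qed
  have "matrix_form A N (\<lambda>k. 0) (sign_twist w c)
      = matrix_form (\<lambda>j k. A j k - lam * (if j = k then w k else 0)) N c (sign_twist w c)"
    using zero by simp
  from matrix_form_coercive_estimate[OF sym psd w_bound \<mu> \<open>0 \<le> lam\<close> this]
  have "lam * \<mu> * coef_sqnorm N c \<le> entry_abs_sum A N * coef_sqnorm N c" by simp
  have "coef_sqnorm N c = 0"
  proof (rule ccontr)
    assume "coef_sqnorm N c \<noteq> 0"
    then have "0 < coef_sqnorm N c" using coef_sqnorm_nonneg[of N c] by simp
    with lam have "entry_abs_sum A N * coef_sqnorm N c < lam * \<mu> * coef_sqnorm N c"
      by (rule mult_strict_right_mono)
    then show False using \<open>lam * \<mu> * coef_sqnorm N c \<le> _\<close> by linarith
  qed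
  then show ?thesis using k by (rule coef_sqnorm_eq_0)
qed

lemma sqrt_le_of_quadratic_bound:
  fixes l K s h :: real
  assumes quad: "l * s \<le> K * s + h * sqrt (K * s)"
    and l: "2 * K \<le> l" "0 < l" and nonneg: "0 \<le> K" "0 \<le> s" "0 \<le> h"
  shows "sqrt (K * s) \<le> 2 * K / l * h"
proof (cases "K * s = 0")
  case False
  define t where "t = sqrt (K * s)"
  have t: "0 < t" "t * t = K * s"
    using False nonneg by (auto simp: t_def le_less)
  have "(l * t) * t \<le> (K * t + K * h) * t"
    using mult_left_mono[OF quad, of K] nonneg(1)
    by (simp only: t_def[symmetric]) (simp add: algebra_simps t(2))
  then have "l * t \<le> K * t + K * h" using t(1) by (simp only: mult_le_cancel_right_pos)
  moreover have "2 * (K * t) \<le> l * t" using l(1) t(1) by (simp add: mult_right_mono)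
  ultimately have "l * t \<le> 2 * K * h" by linarith
  then show ?thesis using l(2) by (simp add: t_def pos_le_divide_eq mult.commute)
qed (use assms in auto)

lemma abs_opnorm_on_inverse_le:
  assumes bij: "bij_betw T S S" and R: "0 \<le> R" and w0: "w0 \<in> S" "w0 \<noteq> (\<lambda>x. 0)"
    and nonneg: "\<And>y. y \<in> S \<Longrightarrow> 0 \<le> normH y"
    and bound: "\<And>y. y \<in> S \<Longrightarrow> normH y \<le> R * normH (T y)"
  shows "\<bar>opnorm_on S (the_inv_into S T)\<bar> \<le> R"
proof -
  let ?Q = "(\<lambda>w. normH (the_inv_into S T w) / normH w) ` (S - {\<lambda>x. 0})"
  have Q: "0 \<le> q \<and> q \<le> R" if q: "q \<in> ?Q" for q
  proof -
    obtain w where w: "w \<in> S" "q = normH (the_inv_into S T w) / normH w" using q by blast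
    define y where "y = the_inv_into S T w"
    have y: "y \<in> S" "T y = w"
      using bij w(1) by (auto simp: y_def the_inv_into_into bij_betw_def f_the_inv_into_f)
    show ?thesis
      using bound[OF y(1)] nonneg[OF y(1)] nonneg[OF w(1)] R
      by (cases "normH w = 0") (auto simp: w(2) y_def[symmetric] y(2) divide_simps mult.commute)
  qed
  have ne: "?Q \<noteq> {}" using w0 by blast
  have "Sup ?Q \<le> R" using ne Q by (intro cSup_least) auto
  moreover have "0 \<le> Sup ?Q"
    using ne Q by (meson all_not_in_conv bdd_aboveI cSup_upper order_trans)
  ultimately show ?thesis by (simp add: opnorm_on_def)
qed

lemma nonzero_of_card_sign_split:
  fixes f :: "'a \<Rightarrow> real"
  assumes A: "finite A" and card: "card {k \<in> A. 0 < f k} + card {k \<in> A. f k < 0} = card A"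
    and k: "k \<in> A"
  shows "f k \<noteq> 0"
proof -
  have "card ({k \<in> A. 0 < f k} \<union> {k \<in> A. f k < 0}) = card A"
    using A card by (subst card_Un_disjoint) auto
  then have "{k \<in> A. 0 < f k} \<union> {k \<in> A. f k < 0} = A"
    using A by (intro card_subset_eq) auto
  then have "k \<in> {k \<in> A. 0 < f k} \<union> {k \<in> A. f k < 0}" using k by simp
  then show ?thesis by auto
qed


lemma matrix_form_add_matrix:
  "matrix_form (\<lambda>j k. A j k + B j k) N c e = matrix_form A N c e + matrix_form B N c e"
  unfolding matrix_form_def sum.distrib[symmetric] by (intro sum.cong refl) (simp add: algebra_simps)

lemma matrix_form_scale_matrix:
  "matrix_form (\<lambda>j k. s * A j k) N c e = complex_of_real s * matrix_form A N c e"
  unfolding matrix_form_def sum_distrib_left by (intro sum.cong refl) (simp add: algebra_simps)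

lemma has_integral_matrix_form:
  assumes "\<And>j k. j \<in> {1..N} \<Longrightarrow> k \<in> {1..N} \<Longrightarrow> (F j k has_integral B j k) S"
  shows "((\<lambda>x. matrix_form (\<lambda>j k. F j k x) N c e) has_integral matrix_form B N c e) S"
  unfolding matrix_form_def
  by (intro has_integral_sum finite_atLeastAtMost has_integral_mult_right has_integral_of_real assms)

lemma has_integral_restrict_subinterval:
  fixes f :: "real \<Rightarrow> 'b::banach"
  assumes "(f has_integral i) {c..d}" "a \<le> c" "d \<le> b"
  shows "((\<lambda>x. if x \<in> {c..d} then f x else 0) has_integral i) {a..b}"
  using has_integral_restrict_closed_subintervals_eq[of c d a b f i] assms by auto

lemma negligible_affine_image: "negligible S \<Longrightarrow> negligible ((\<lambda>x::real. c + b * x) ` S)"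
  by (rule negligible_differentiable_image_negligible) (auto intro!: derivative_intros)

lemma AE_lebesgue_on_imp_negligible_exception:
  assumes "T \<in> sets lebesgue" "AE x in lebesgue_on T. Q x"
  shows "\<exists>S. negligible S \<and> (\<forall>x\<in>T - S. Q x)"
proof -
  from AE_E3[OF assms(2)] obtain S where S: "\<And>x. x \<in> T - S \<Longrightarrow> Q x"
    "S \<in> null_sets (lebesgue_on T)"
    by (metis space_lebesgue_on)
  then have "S \<in> null_sets lebesgue"
    using null_sets_restrict_space[OF assms(1)] by auto
  then show ?thesis using S negligible_iff_null_sets by blast
qed

lemma negligible_exception_affine_rescale:
  assumes T: "negligible T" and b: "0 < (b::real)"
    and H: "\<forall>x\<in>{0..1} - T. Q (c + b * x) x"
  shows "\<exists>T'. negligible T' \<and> (\<forall>t\<in>{c..c+b} - T'. Q t ((t - c) / b))"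
proof (intro exI conjI ballI)
  show "negligible ((\<lambda>x. c + b * x) ` T)" by (rule negligible_affine_image[OF T])
  fix t assume t: "t \<in> {c..c+b} - (\<lambda>x. c + b * x) ` T"
  let ?x = "(t - c) / b"
  have eq: "c + b * ?x = t" using b by simp
  have "?x \<in> {0..1}" using t b by (auto simp: divide_simps)
  moreover have "?x \<notin> T" using t eq by (metis DiffD2 image_eqI)
  ultimately have "Q (c + b * ?x) ?x" using H by blast
  then show "Q t ?x" by (simp only: eq)
qed

locale hat_partition =
  fixes n m :: nat and a :: "nat \<Rightarrow> real"
  assumes n2: "2 \<le> n" and apos: "\<forall>k\<in>{1..n}. 0 < a k"
    and asum: "(\<Sum>k=1..n. a k) = 1" and m: "m \<in> {1..n}"
begin

abbreviation "N \<equiv> n - 1"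
abbreviation "g k \<equiv> gam a n m k"
abbreviation "al k \<equiv> alpha a k"
abbreviation "dl k \<equiv> delt a m k"

lemma alpha_n: "al n = 1"
  using asum by (simp add: alpha_def)

lemma a_less_1:
  assumes k: "k \<in> {1..n}" shows "a k < 1"
proof -
  have "(if k = 1 then 2 else 1) \<in> {1..n} \<and> (if k = 1 then 2 else (1::nat)) \<noteq> k"
    using k n2 by auto
  then obtain j where j: "j \<in> {1..n}" "j \<noteq> k" by blast
  have "(\<Sum>i=1..n. a i) = a k + (\<Sum>i\<in>{1..n}-{k}. a i)"
    using k by (simp add: sum.remove)
  moreover have "a j \<le> (\<Sum>i\<in>{1..n}-{k}. a i)"
    using j apos by (intro member_le_sum) (auto intro!: less_imp_le)
  moreover have "a j > 0" using j apos by auto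
  ultimately show ?thesis using asum by linarith
qed

lemma gam_bounds:
  assumes k: "k \<in> {1..N}" shows "al (k - 1) \<le> g k \<and> g k < al k"
proof (cases "k = m")
  case True
  have an: "0 < a n" "a n < 1" using apos a_less_1[of n] n2 by auto
  then have "0 < a m * a n" "a m * a n < a m" using apos True k by auto
  then show ?thesis using True alpha_pred[of k a] k an by (auto simp: gam_def)
next
  case False
  then show ?thesis using alpha_strict_mono[OF apos, of "k - 1" k] k by (auto simp: gam_def)
qed

lemma delt_bounds:
  assumes k: "k \<in> {1..N}" shows "al k < dl k \<and> dl k \<le> al (k + 1)"
proof (cases "k + 1 = m")
  case True
  have a1: "0 < a 1" "a 1 < 1" using apos a_less_1[of 1] n2 by auto
  then have "0 < a m * a 1" "a m * a 1 < a m" using apos True k by auto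
  then show ?thesis using True alpha_pred[of "k + 1" a] k a1 by (auto simp: delt_def)
next
  case False
  then show ?thesis using alpha_strict_mono[OF apos, of k "k + 1"] k by (auto simp: delt_def)
qed

lemma hat_nodes_ordered:
  assumes k: "k \<in> {1..N}" shows "0 \<le> g k \<and> g k < al k \<and> al k < dl k \<and> dl k \<le> 1"
proof -
  have "al 0 \<le> al (k - 1)" "al (k + 1) \<le> al n"
    using alpha_mono[OF apos, of 0 "k - 1"] alpha_mono[OF apos, of "k + 1" n] k by auto
  then show ?thesis
    using gam_bounds[OF k] delt_bounds[OF k] alpha_n by (simp add: alpha_def)
qed

definition phi :: "nat \<Rightarrow> real \<Rightarrow> real"
  where "phi k = hat (g k) (al k) (dl k)"

definition phi' :: "nat \<Rightarrow> real \<Rightarrow> real"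
  where "phi' k = hat_slope (g k) (al k) (dl k)"

definition phi_prod' :: "nat \<Rightarrow> nat \<Rightarrow> real \<Rightarrow> real"
  where "phi_prod' j k x = phi' j x * phi k x + phi' k x * phi j x"

definition breaks :: "real set"
  where "breaks = (\<Union>k\<in>{1..N}. {g k, al k, dl k})"

lemma finite_breaks: "finite breaks"
  by (simp add: breaks_def)

lemma phi_at_node:
  assumes j: "j \<in> {1..N}" and k: "k \<in> {1..N}"
  shows "phi j (al k) = (if j = k then 1 else 0)"
proof -
  have "al k \<le> g j \<or> dl j \<le> al k" if "j \<noteq> k"
  proof (cases "j < k")
    case True
    have "al (j + 1) \<le> al k" using alpha_mono[OF apos, of "j + 1" k] True k by auto
    then show ?thesis using delt_bounds[OF j] by auto
  next
    case False
    have "al k \<le> al (j - 1)" using alpha_mono[OF apos, of k "j - 1"] False j that by auto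
    then show ?thesis using gam_bounds[OF j] by auto
  qed
  then show ?thesis
    using hat_nodes_ordered[OF j] by (auto simp: phi_def hat_peak hat_outside)
qed

lemma phi_outside: "k \<in> {1..N} \<Longrightarrow> x \<le> g k \<or> dl k \<le> x \<Longrightarrow> phi k x = 0"
  using hat_nodes_ordered by (auto simp: phi_def hat_outside)

lemma phi_prod'_outside: "j \<in> {1..N} \<Longrightarrow> k \<in> {1..N} \<Longrightarrow> x \<le> g k \<or> dl k \<le> x \<Longrightarrow> phi_prod' j k x = 0"
  using hat_nodes_ordered by (auto simp: phi_prod'_def phi'_def phi_def hat_outside hat_slope_outside)

lemma phi_has_real_derivative:
  "k \<in> {1..N} \<Longrightarrow> x \<notin> breaks \<Longrightarrow> (phi k has_real_derivative phi' k x) (at x)"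
  unfolding phi_def phi'_def breaks_def using hat_nodes_ordered by (auto intro!: hat_has_real_derivative)

lemma continuous_on_phi: "k \<in> {1..N} \<Longrightarrow> continuous_on S (phi k)"
  unfolding phi_def using hat_nodes_ordered by (auto intro!: continuous_on_hat)

lemma phi_prod'_has_integral:
  assumes j: "j \<in> {1..N}" and k: "k \<in> {1..N}" and uv: "u \<le> v"
  shows "(phi_prod' j k has_integral (phi j v * phi k v - phi j u * phi k u)) {u..v}"
proof (rule fundamental_theorem_of_calculus_interior_strong[OF finite_breaks uv])
  fix x assume "x \<in> {u<..<v} - breaks"
  then show "((\<lambda>t. phi j t * phi k t) has_vector_derivative phi_prod' j k x) (at x)"
    using DERIV_mult[OF phi_has_real_derivative[OF j] phi_has_real_derivative[OF k]]
    by (simp add: phi_prod'_def has_real_derivative_iff_has_vector_derivative mult.commute)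
next
  show "continuous_on {u..v} (\<lambda>t. phi j t * phi k t)"
    using continuous_on_phi[OF j] continuous_on_phi[OF k] by (intro continuous_intros)
qed

definition comb :: "(nat \<Rightarrow> complex) \<Rightarrow> real \<Rightarrow> complex"
  where "comb c x = (\<Sum>k=1..n-1. c k * ebasis a n m k x)"

definition comb' :: "(nat \<Rightarrow> complex) \<Rightarrow> real \<Rightarrow> complex"
  where "comb' c x = (\<Sum>k=1..N. c k * complex_of_real (phi' k x))"

lemma comb_eq: "comb c x = (\<Sum>k=1..N. c k * complex_of_real (phi k x))"
  by (simp add: comb_def ebasis_def phi_def)

lemma H2_eq_range_comb: "H2 a n m = range comb"
  by (auto simp: H2_def comb_def[abs_def])

lemma comb_cong: "(\<And>k. k \<in> {1..N} \<Longrightarrow> c k = c' k) \<Longrightarrow> comb c = comb c'"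
  unfolding comb_def by (intro ext sum.cong) auto

lemma comb_has_vector_derivative: "x \<notin> breaks \<Longrightarrow> (comb c has_vector_derivative comb' c x) (at x)"
  unfolding comb_eq[abs_def] comb'_def
  by (intro has_vector_derivative_sum has_vector_derivative_mult_right has_vector_derivative_of_real
      phi_has_real_derivative) auto

lemma vector_derivative_comb_product:
  assumes "x \<notin> breaks"
  shows "vector_derivative (comb c) (at x) * cnj (vector_derivative (comb e) (at x))
           = matrix_form (\<lambda>j k. phi' j x * phi' k x) N c e"
    and "vector_derivative (\<lambda>t. comb c t * cnj (comb e t)) (at x)
           = matrix_form (\<lambda>j k. phi_prod' j k x) N c e"
proof -
  have "vector_derivative (\<lambda>t. comb c t * cnj (comb e t)) (at x)
      = comb c x * cnj (comb' e x) + comb' c x * cnj (comb e x)"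
    by (intro vector_derivative_at has_vector_derivative_mult has_vector_derivative_cnj
        comb_has_vector_derivative assms)
  then show "vector_derivative (\<lambda>t. comb c t * cnj (comb e t)) (at x)
           = matrix_form (\<lambda>j k. phi_prod' j k x) N c e"
    unfolding comb'_def comb_eq cnj_sum sum_product matrix_form_def phi_prod'_def sum.distrib[symmetric]
    by simp (intro sum.cong refl, simp add: algebra_simps)
  show "vector_derivative (comb c) (at x) * cnj (vector_derivative (comb e) (at x))
           = matrix_form (\<lambda>j k. phi' j x * phi' k x) N c e"
    unfolding vector_derivative_at[OF comb_has_vector_derivative[OF assms]]
    unfolding comb'_def cnj_sum sum_product matrix_form_def
    by (intro sum.cong refl) (simp add: algebra_simps)
qed

definition gram :: "nat \<Rightarrow> nat \<Rightarrow> real"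
  where "gram j k = integral {0..1} (\<lambda>x. phi' j x * phi' k x)"

lemma gram_sym: "gram j k = gram k j"
  unfolding gram_def by (simp add: mult.commute)

lemma has_integral_gram:
  "j \<in> {1..N} \<Longrightarrow> k \<in> {1..N} \<Longrightarrow> ((\<lambda>x. phi' j x * phi' k x) has_integral gram j k) {0..1}"
  unfolding gram_def phi'_def using hat_nodes_ordered
  by (intro integrable_integral hat_slope_product_integrable) auto

lemma has_integral_comb_derivative_product:
  "((\<lambda>x. vector_derivative (comb c) (at x) * cnj (vector_derivative (comb e) (at x)))
      has_integral matrix_form gram N c e) {0..1}"
  by (rule has_integral_spike[OF negligible_finite[OF finite_breaks] _
        has_integral_matrix_form[OF has_integral_gram]]) (simp_all add: vector_derivative_comb_product)

lemma ipH_comb: "ipH (comb c) (comb e) = matrix_form gram N c e"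
  unfolding ipH_def by (rule integral_unique[OF has_integral_comb_derivative_product])

lemma gram_psd: "0 \<le> Re (matrix_form gram N c c)"
proof -
  have "((\<lambda>x. Re (vector_derivative (comb c) (at x) * cnj (vector_derivative (comb c) (at x))))
      has_integral Re (matrix_form gram N c c)) {0..1}"
    using has_integral_linear[OF has_integral_comb_derivative_product bounded_linear_Re]
    by (simp add: o_def)
  then show ?thesis by (rule has_integral_nonneg) (simp add: complex_mult_cnj)
qed

lemma normH_comb: "normH (comb c) = sqrt (Re (matrix_form gram N c c))"
  by (simp add: normH_def ipH_comb)

lemma comb_unit_nonzero: "comb (\<lambda>k. if k = 1 then 1 else 0) \<noteq> (\<lambda>x. 0)"
proof
  have one: "1 \<in> {1..N}" using n2 by auto
  assume "comb (\<lambda>k. if k = 1 then 1 else 0) = (\<lambda>x. 0)"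
  then have "comb (\<lambda>k. if k = 1 then 1 else 0) (al 1) = 0" by simp
  moreover have "comb (\<lambda>k. if k = 1 then 1 else 0) (al 1) = 1"
  proof -
    have "comb (\<lambda>k. if k = 1 then 1 else 0) (al 1)
        = (\<Sum>k=1..N. if k = 1 then complex_of_real (phi k (al 1)) else 0)"
      unfolding comb_eq by (intro sum.cong refl) auto
    also have "\<dots> = 1" using one phi_at_node[OF one one] by (simp add: sum.delta')
    finally show ?thesis .
  qed
  ultimately show False by simp
qed

end


locale self_similar = hat_partition +
  fixes d beta :: "nat \<Rightarrow> real" and P :: "real \<Rightarrow> real"
  assumes dzero: "\<forall>k\<in>{1..n}. k \<noteq> m \<longrightarrow> d k = 0"
    and Pself: "\<forall>k\<in>{1..n}. AE x in lebesgue_on {0..1}.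
                   P (alpha a (k - 1) + a k * x) = beta k + d k * P x"
begin

lemma P_rescaled_ae:
  assumes j: "j \<in> {1..n}"
  shows "\<exists>T. negligible T \<and> (\<forall>t\<in>{al (j - 1)..al j} - T.
            P t = beta j + d j * P ((t - al (j - 1)) / a j))"
proof -
  have ae: "AE x in lebesgue_on {0..1}. P (al (j - 1) + a j * x) = beta j + d j * P x"
    using Pself j by blast
  obtain S where S: "negligible S" "\<forall>x\<in>{0..1} - S. P (al (j - 1) + a j * x) = beta j + d j * P x"
    using AE_lebesgue_on_imp_negligible_exception[OF _ ae] by auto
  have aj: "0 < a j" using apos j by auto
  have "al j = al (j - 1) + a j" using alpha_pred[of j a] j by auto
  then show ?thesis
    using negligible_exception_affine_rescale[OF S(1) aj, of "\<lambda>t x. P t = beta j + d j * P x" "al (j - 1)"]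
      S(2) by auto
qed

lemma P_const_ae:
  assumes "j \<in> {1..n}" "j \<noteq> m"
  shows "\<exists>T. negligible T \<and> (\<forall>t\<in>{al (j - 1)..al j} - T. P t = beta j)"
  using P_rescaled_ae[OF assms(1)] dzero assms by auto

text \<open>The interval below is the image of the \<open>j\<close>-th interval under the \<open>m\<close>-th similarity.\<close>

lemma P_const_ae_inner:
  assumes j: "j \<in> {1..n}" "j \<noteq> m"
  shows "\<exists>T. negligible T \<and> (\<forall>t\<in>{al (m - 1) + a m * al (j - 1)..al (m - 1) + a m * al j} - T.
            P t = beta m + d m * beta j)"
proof -
  obtain T1 where T1: "negligible T1" "\<forall>t\<in>{al (m - 1)..al m} - T1.
            P t = beta m + d m * P ((t - al (m - 1)) / a m)"
    using P_rescaled_ae m by blast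
  obtain T2 where T2: "negligible T2" "\<forall>t\<in>{al (j - 1)..al j} - T2. P t = beta j"
    using P_const_ae[OF j] by blast
  have am: "0 < a m" using apos m by auto
  let ?f = "\<lambda>x. al (m - 1) + a m * x"
  have sub: "0 \<le> al (j - 1)" "al j \<le> 1"
    using alpha_mono[OF apos, of 0 "j - 1"] alpha_mono[OF apos, of j n] alpha_n j by auto
  have am_eq: "al m = al (m - 1) + a m" using alpha_pred[of m a] m by auto
  show ?thesis
  proof (intro exI conjI ballI)
    show "negligible (T1 \<union> ?f ` T2)" using T1(1) negligible_affine_image[OF T2(1)] by auto
    fix t assume t: "t \<in> {?f (al (j - 1))..?f (al j)} - (T1 \<union> ?f ` T2)"
    let ?x = "(t - al (m - 1)) / a m"
    have t_eq: "t = ?f ?x" using am by auto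
    have "?x \<in> {al (j - 1)..al j}" using t am by (auto simp: divide_simps mult.commute)
    moreover have "?x \<notin> T2" using t t_eq by (metis DiffD2 UnI2 image_eqI)
    ultimately have "P ?x = beta j" using T2 by auto
    moreover have "a m * al (j - 1) \<ge> 0" "a m * al j \<le> a m"
      using sub am by (auto simp: mult_left_le)
    then have "t \<in> {al (m - 1)..al m} - T1" using t am_eq by auto
    ultimately show "P t = beta m + d m * beta j" using T1 by auto
  qed
qed

definition left_value :: "nat \<Rightarrow> real"
  where "left_value k = (if k = m then beta m + d m * beta n else beta k)"

definition right_value :: "nat \<Rightarrow> real"
  where "right_value k = (if k + 1 = m then beta m + d m * beta 1 else beta (k + 1))"

lemma zeta_eq: "zeta d beta n m k = right_value k - left_value k"
  by (auto simp: zeta_def right_value_def left_value_def)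

lemma P_left_ae:
  assumes k: "k \<in> {1..N}"
  shows "\<exists>T. negligible T \<and> (\<forall>t\<in>{g k..al k} - T. P t = left_value k)"
proof (cases "k = m")
  case True
  have n: "n \<in> {1..n}" "n \<noteq> m" using k True n2 by auto
  have "al (n - 1) = 1 - a n" using alpha_pred[of n a] alpha_n n2 by auto
  then have "a m * al (n - 1) = a m - a m * a n" by (simp add: right_diff_distrib)
  then have "al (m - 1) + a m * al (n - 1) = g k" "al (m - 1) + a m * al n = al k"
    using True alpha_pred[of m a] m alpha_n by (auto simp: gam_def algebra_simps)
  then show ?thesis using P_const_ae_inner[OF n] True by (auto simp: left_value_def)
next
  case False
  then show ?thesis using P_const_ae[of k] k by (auto simp: left_value_def gam_def)
qed

lemma P_right_ae:
  assumes k: "k \<in> {1..N}"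
  shows "\<exists>T. negligible T \<and> (\<forall>t\<in>{al k..dl k} - T. P t = right_value k)"
proof (cases "k + 1 = m")
  case True
  have one: "1 \<in> {1..n}" "1 \<noteq> m" using k True n2 by auto
  have "al (m - 1) + a m * al (1 - 1) = al k" "al (m - 1) + a m * al 1 = dl k"
    using True by (auto simp: delt_def alpha_def)
  then show ?thesis using P_const_ae_inner[OF one] True by (auto simp: right_value_def)
next
  case False
  then show ?thesis using P_const_ae[of "k + 1"] k by (auto simp: right_value_def delt_def)
qed

text \<open>On each linear piece of \<open>phi k\<close> the potential is a.e. constant, and the integral of
  \<open>(phi j * phi k)'\<close> over the piece is the jump of \<open>phi j * phi k\<close>, nonzero only at the common peak.\<close>

lemma has_integral_P_phi_prod':
  assumes j: "j \<in> {1..N}" and k: "k \<in> {1..N}"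
  shows "((\<lambda>x. P x * phi_prod' j k x) has_integral (if j = k then - zeta d beta n m k else 0)) {0..1}"
proof -
  obtain T1 where T1: "negligible T1" "\<forall>t\<in>{g k..al k} - T1. P t = left_value k"
    using P_left_ae[OF k] by blast
  obtain T2 where T2: "negligible T2" "\<forall>t\<in>{al k..dl k} - T2. P t = right_value k"
    using P_right_ae[OF k] by blast
  note nodes = hat_nodes_ordered[OF k]
  have ends: "phi k (g k) = 0" "phi k (dl k) = 0" using phi_outside[OF k] by auto
  have "(phi_prod' j k has_integral (if j = k then 1 else 0)) {g k..al k}"
    using phi_prod'_has_integral[OF j k, of "g k" "al k"] nodes ends(1)
      phi_at_node[OF j k] phi_at_node[OF k k] by simp
  from has_integral_restrict_subinterval[OF has_integral_mult_right[OF this, of "left_value k"]]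
  have left: "((\<lambda>x. if x \<in> {g k..al k} then left_value k * phi_prod' j k x else 0)
      has_integral left_value k * (if j = k then 1 else 0)) {0..1}"
    using nodes by simp
  have "(phi_prod' j k has_integral - (if j = k then 1 else 0)) {al k..dl k}"
    using phi_prod'_has_integral[OF j k, of "al k" "dl k"] nodes ends(2)
      phi_at_node[OF j k] phi_at_node[OF k k] by simp
  from has_integral_restrict_subinterval[OF has_integral_mult_right[OF this, of "right_value k"]]
  have right: "((\<lambda>x. if x \<in> {al k..dl k} then right_value k * phi_prod' j k x else 0)
      has_integral right_value k * - (if j = k then 1 else 0)) {0..1}"
    using nodes by simp
  have integral: "((\<lambda>x. P x * phi_prod' j k x) has_integral
      left_value k * (if j = k then 1 else 0) + right_value k * - (if j = k then 1 else 0)) {0..1}"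
  proof (rule has_integral_spike[OF _ _ has_integral_add[OF left right]])
    show "negligible (T1 \<union> T2 \<union> {al k})" using T1(1) T2(1) by auto
    fix x assume x: "x \<in> {0..1} - (T1 \<union> T2 \<union> {al k})"
    have "x \<noteq> al k" using x by blast
    then consider "x \<le> g k \<or> dl k \<le> x" | "g k < x \<and> x < al k" | "al k < x \<and> x < dl k"
      by (metis linorder_neqE_linordered_idom not_le)
    then show "P x * phi_prod' j k x = (if x \<in> {g k..al k} then left_value k * phi_prod' j k x else 0)
        + (if x \<in> {al k..dl k} then right_value k * phi_prod' j k x else 0)"
    proof cases
      case 1
      then show ?thesis using phi_prod'_outside[OF j k, of x] by simp
    next
      case 2
      then show ?thesis using T1(2) x by auto
    next
      case 3
      then show ?thesis using T2(2) x by auto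
    qed
  qed
  have "left_value k * (if j = k then 1 else 0) + right_value k * - (if j = k then 1 else 0)
      = (if j = k then - zeta d beta n m k else 0)"
    by (simp add: zeta_eq)
  with integral show ?thesis by (simp only:)
qed

definition form_matrix :: "real \<Rightarrow> nat \<Rightarrow> nat \<Rightarrow> real"
  where "form_matrix lam j k = gram j k - lam * (if j = k then zeta d beta n m k else 0)"

lemma Cform_comb: "Cform P lam (comb c) (comb e) = matrix_form (form_matrix lam) N c e"
proof -
  have "((\<lambda>x. phi' j x * phi' k x + lam * P x * phi_prod' j k x) has_integral form_matrix lam j k) {0..1}"
    if "j \<in> {1..N}" "k \<in> {1..N}" for j k
  proof -
    have "form_matrix lam j k = gram j k + lam * (if j = k then - zeta d beta n m k else 0)"
      by (simp add: form_matrix_def)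
    then show ?thesis
      unfolding mult.assoc using has_integral_add[OF has_integral_gram[OF that]
        has_integral_mult_right[OF has_integral_P_phi_prod'[OF that], of lam]] by simp
  qed
  note integral = has_integral_matrix_form[OF this, where c = c and e = e]
  have "((\<lambda>x. vector_derivative (comb c) (at x) * cnj (vector_derivative (comb e) (at x))
       + complex_of_real (lam * P x) * vector_derivative (\<lambda>t. comb c t * cnj (comb e t)) (at x))
      has_integral matrix_form (form_matrix lam) N c e) {0..1}"
  proof (rule has_integral_spike[OF negligible_finite[OF finite_breaks] _ integral])
    fix x assume "x \<in> {0..1} - breaks"
    then have "x \<notin> breaks" by simp
    then show "vector_derivative (comb c) (at x) * cnj (vector_derivative (comb e) (at x))
       + complex_of_real (lam * P x) * vector_derivative (\<lambda>t. comb c t * cnj (comb e t)) (at x)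
      = matrix_form (\<lambda>j k. phi' j x * phi' k x + lam * P x * phi_prod' j k x) N c e"
      by (simp only: vector_derivative_comb_product[OF \<open>x \<notin> breaks\<close>] matrix_form_add_matrix
          matrix_form_scale_matrix)
  qed
  then show ?thesis unfolding Cform_def by (rule integral_unique)
qed

end


locale form_operator = self_similar +
  fixes C :: "real \<Rightarrow> (real \<Rightarrow> complex) \<Rightarrow> (real \<Rightarrow> complex)"
  assumes C_maps: "\<forall>lam. \<forall>y\<in>H2 a n m. C lam y \<in> H2 a n m"
    and C_form: "\<forall>lam. \<forall>y\<in>H2 a n m. \<forall>z\<in>H2 a n m. ipH (C lam y) z = Cform P lam y z"
    and Z: "Zplus d beta n m + Zminus d beta n m = n - 1"
begin

abbreviation "z \<equiv> zeta d beta n m"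
abbreviation "K \<equiv> entry_abs_sum gram N"

lemma zeta_nonzero: "k \<in> {1..N} \<Longrightarrow> z k \<noteq> 0"
  using Z by (intro nonzero_of_card_sign_split[of "{1..N}"]) (auto simp: Zplus_def Zminus_def)

definition mu :: real
  where "mu = Min ((\<lambda>k. \<bar>z k\<bar>) ` {1..N})"

lemma mu_le: "k \<in> {1..N} \<Longrightarrow> mu \<le> \<bar>z k\<bar>"
  unfolding mu_def by (intro Min_le) auto

lemma mu_pos: "0 < mu"
proof -
  have "mu \<in> (\<lambda>k. \<bar>z k\<bar>) ` {1..N}" unfolding mu_def using n2 by (intro Min_in) auto
  then show ?thesis using zeta_nonzero by auto
qed

lemma form_matrix_eq: "form_matrix lam = (\<lambda>j k. gram j k - lam * (if j = k then z k else 0))"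
  by (simp add: form_matrix_def fun_eq_iff)

lemma ipH_C_comb: "ipH (C lam (comb c)) (comb e) = matrix_form (form_matrix lam) N c e"
  using C_form by (simp add: H2_eq_range_comb Cform_comb)

lemma C_comb:
  obtains c' where "C lam (comb c) = comb c'"
    and "\<And>e. matrix_form gram N c' e = matrix_form (form_matrix lam) N c e"
proof -
  obtain c' where c': "C lam (comb c) = comb c'"
    using C_maps by (auto simp: H2_eq_range_comb)
  then show thesis using that ipH_C_comb[of lam c] by (simp add: ipH_comb)
qed

text \<open>Definiteness of the Gram matrix is read off from the form of \<open>C 1\<close>, tested against the sign
  twist of a kernel vector.\<close>

lemma gram_nondegenerate:
  assumes kernel: "\<And>e. matrix_form gram N x e = 0" and k: "k \<in> {1..N}"
  shows "x k = 0"
proof -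
  let ?\<sigma> = "sign_twist z x"
  obtain v where v: "\<And>e. matrix_form gram N v e = matrix_form (form_matrix 1) N ?\<sigma> e"
    using C_comb by metis
  have "matrix_form gram N v x = 0" "matrix_form gram N ?\<sigma> x = 0"
    by (simp_all only: matrix_form_hermitian[where A = gram and c = x, OF gram_sym] kernel
        complex_cnj_zero)
  with v[of x] have "diag_form z N ?\<sigma> x = 0"
    using matrix_form_minus_diag[where A = gram and s = 1 and w = z and N = N and c = ?\<sigma> and e = x]
    by (simp add: form_matrix_eq)
  then have "complex_of_real (\<Sum>k=1..N. (cmod (x k))\<^sup>2 * \<bar>z k\<bar>) = 0"
    by (simp only: diag_form_sign_twist)
  then have "(\<Sum>k=1..N. (cmod (x k))\<^sup>2 * \<bar>z k\<bar>) = 0"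
    by (simp only: of_real_eq_0_iff)
  then have "mu * coef_sqnorm N x \<le> 0"
    using weighted_sqnorm_ge[where N = N and w = z and c = x, OF mu_le] by linarith
  then have "coef_sqnorm N x = 0"
    using mu_pos coef_sqnorm_nonneg[of N x] by (simp add: mult_le_0_iff)
  then show ?thesis using k by (rule coef_sqnorm_eq_0)
qed

lemma form_matrix_kernel_trivial:
  assumes "K < lam * mu" "\<And>e. matrix_form (form_matrix lam) N x e = 0"
  shows "\<forall>k\<in>{1..N}. x k = 0"
proof
  fix k assume "k \<in> {1..N}"
  show "x k = 0"
    by (rule matrix_form_kernel_trivial[where w = z, OF gram_sym gram_psd mu_le mu_pos assms(1) _ \<open>k \<in> {1..N}\<close>])
      (use assms(2)[of "sign_twist z x"] in \<open>unfold form_matrix_eq\<close>)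
qed

lemma inj_on_C:
  assumes "K < lam * mu" shows "inj_on (C lam) (H2 a n m)"
proof (rule inj_onI)
  fix y1 y2 assume "y1 \<in> H2 a n m" "y2 \<in> H2 a n m" and eq: "C lam y1 = C lam y2"
  then obtain c1 c2 where c: "y1 = comb c1" "y2 = comb c2" by (auto simp: H2_eq_range_comb)
  have "matrix_form (form_matrix lam) N (\<lambda>k. c1 k - c2 k) e = 0" for e
    using ipH_C_comb[of lam c1 e] ipH_C_comb[of lam c2 e] eq c by (simp add: matrix_form_diff_left)
  then have "\<forall>k\<in>{1..N}. c1 k - c2 k = 0" by (rule form_matrix_kernel_trivial[OF assms])
  then show "y1 = y2" unfolding c by (intro comb_cong) simp
qed

lemma C_onto:
  assumes lam: "K < lam * mu" shows "H2 a n m \<subseteq> C lam ` H2 a n m"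
proof
  fix w assume "w \<in> H2 a n m"
  then obtain b where b: "w = comb b" by (auto simp: H2_eq_range_comb)
  obtain c where c: "\<And>e. matrix_form (form_matrix lam) N c e = matrix_form gram N b e"
    using matrix_form_solvable[of "form_matrix lam" N gram b] form_matrix_kernel_trivial[OF lam]
    by blast
  obtain c' where c': "C lam (comb c) = comb c'"
    and form: "\<And>e. matrix_form gram N c' e = matrix_form (form_matrix lam) N c e"
    using C_comb[of lam c] by blast
  have diff_zero: "matrix_form gram N (\<lambda>k. c' k - b k) e = 0" for e
    using c form by (simp add: matrix_form_diff_left)
  have "c' k = b k" if "k \<in> {1..N}" for k
    using gram_nondegenerate[OF diff_zero that] by simp
  then have "comb c' = comb b" by (rule comb_cong)
  then have "C lam (comb c) = w" using b c' by simp
  then show "w \<in> C lam ` H2 a n m" by (auto simp: H2_eq_range_comb)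
qed

lemma bij_betw_C: "K < lam * mu \<Longrightarrow> bij_betw (C lam) (H2 a n m) (H2 a n m)"
  using inj_on_C C_onto C_maps by (auto simp: bij_betw_def)

lemma normH_nonneg: "y \<in> H2 a n m \<Longrightarrow> 0 \<le> normH y"
  using gram_psd by (auto simp: H2_eq_range_comb normH_comb)

lemma normH_le_C:
  assumes lam: "0 < lam" "2 * K \<le> lam * mu" and y: "y \<in> H2 a n m"
  shows "normH y \<le> 2 * K / (lam * mu) * normH (C lam y)"
proof -
  obtain c where c: "y = comb c" using y by (auto simp: H2_eq_range_comb)
  obtain c' where c': "C lam (comb c) = comb c'"
    and form: "\<And>e. matrix_form gram N c' e = matrix_form (form_matrix lam) N c e"
    using C_comb[of lam c] by blast
  have "lam * mu * coef_sqnorm N c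
      \<le> K * coef_sqnorm N c + normH (comb c') * sqrt (K * coef_sqnorm N c)"
    using matrix_form_coercive_estimate[where w = z, OF gram_sym gram_psd mu_le mu_pos, of lam c' c] form lam(1)
    by (simp add: normH_comb form_matrix_eq)
  then have "sqrt (K * coef_sqnorm N c) \<le> 2 * K / (lam * mu) * normH (comb c')"
    using lam mu_pos entry_abs_sum_nonneg coef_sqnorm_nonneg normH_nonneg[of "comb c'"]
    by (intro sqrt_le_of_quadratic_bound) (auto simp: H2_eq_range_comb)
  moreover have "normH (comb c) \<le> sqrt (K * coef_sqnorm N c)"
    unfolding normH_comb by (rule real_sqrt_le_mono[OF Re_matrix_form_le])
  ultimately show ?thesis using c c' by simp
qed

definition threshold :: real
  where "threshold = 2 * K / mu + 1"

lemma above_threshold: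
  assumes "threshold \<le> lam"
  shows "0 < lam" "2 * K \<le> lam * mu" "K < lam * mu"
proof -
  have "threshold * mu \<le> lam * mu"
    using mult_right_mono[OF assms less_imp_le[OF mu_pos]] .
  moreover have "threshold * mu = 2 * K + mu" using mu_pos by (simp add: threshold_def field_simps)
  moreover have "0 \<le> K" by (rule entry_abs_sum_nonneg)
  ultimately have "0 < lam * mu" "2 * K \<le> lam * mu" "K < lam * mu" using mu_pos by linarith+
  then show "0 < lam" "2 * K \<le> lam * mu" "K < lam * mu" using mu_pos by (simp_all add: zero_less_mult_iff)
qed

lemma abs_opnorm_inverse_C_le:
  assumes "threshold \<le> lam"
  shows "\<bar>opnorm_on (H2 a n m) (the_inv_into (H2 a n m) (C lam))\<bar> \<le> 2 * K / mu * \<bar>1 / lam\<bar>"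
proof -
  note lam = above_threshold[OF assms]
  have "\<bar>opnorm_on (H2 a n m) (the_inv_into (H2 a n m) (C lam))\<bar> \<le> 2 * K / (lam * mu)"
    using lam mu_pos entry_abs_sum_nonneg[of gram N]
    by (intro abs_opnorm_on_inverse_le[OF bij_betw_C _ _ comb_unit_nonzero normH_nonneg normH_le_C])
      (auto simp: H2_eq_range_comb)
  then show ?thesis using lam by (simp add: mult.commute)
qed

end

theorem mainTheorem5:
  fixes n m :: nat and a d beta :: "nat \<Rightarrow> real" and P :: "real \<Rightarrow> real"
    and C :: "real \<Rightarrow> (real \<Rightarrow> complex) \<Rightarrow> (real \<Rightarrow> complex)"
  assumes n2: "n \<ge> 2"
    and apos: "\<forall>k\<in>{1..n}. a k > 0"
    and asum: "(\<Sum>k=1..n. a k) = 1"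
    and dsum: "(\<Sum>k=1..n. a k * (d k)\<^sup>2) < 1"
    and m: "m \<in> {1..n}"
    and dzero: "\<forall>k\<in>{1..n}. k \<noteq> m \<longrightarrow> d k = 0"
    and Pmeas: "P \<in> borel_measurable (lebesgue_on {0..1})"
    and PL2: "integrable (lebesgue_on {0..1}) (\<lambda>x. (P x)\<^sup>2)"
    and Pself: "\<forall>k\<in>{1..n}. AE x in lebesgue_on {0..1}.
                   P (alpha a (k - 1) + a k * x) = beta k + d k * P x"
    and Cmaps: "\<forall>lam. \<forall>y\<in>H2 a n m. C lam y \<in> H2 a n m"
    and Cform: "\<forall>lam. \<forall>y\<in>H2 a n m. \<forall>z\<in>H2 a n m. ipH (C lam y) z = Cform P lam y z"
    and Z: "Zplus d beta n m + Zminus d beta n m = n - 1"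
  shows "eventually (\<lambda>lam. bij_betw (C lam) (H2 a n m) (H2 a n m)) at_top
       \<and> (\<lambda>lam. opnorm_on (H2 a n m) (the_inv_into (H2 a n m) (C lam))) \<in> O(\<lambda>lam. 1 / lam)"
proof -
  interpret form_operator n m a d beta P C
    using n2 apos asum m dzero Pself Cmaps Cform Z by unfold_locales auto
  have "eventually (\<lambda>lam. bij_betw (C lam) (H2 a n m) (H2 a n m)) at_top"
    unfolding eventually_at_top_linorder
    by (intro exI[of _ threshold] allI impI bij_betw_C above_threshold(3))
  moreover have "(\<lambda>lam. opnorm_on (H2 a n m) (the_inv_into (H2 a n m) (C lam))) \<in> O(\<lambda>lam. 1 / lam)"
    by (intro bigoI[where c = "2 * K / mu"], unfold eventually_at_top_linorder real_norm_def)
      (intro exI[of _ threshold] allI impI abs_opnorm_inverse_C_le)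
  ultimately show ?thesis by blast
qed

end
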